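(* Let $\mathrm{X},\mathrm{Y}$ be locally compact Hausdorff spaces, let $F(\mathrm{X})\subset C_0(\mathrm{X})_+$ contain sufficiently many functions to peak on compact $G_\delta$ subsets of $\mathrm{X}$, and let $T:F(\mathrm{X})\to C_0(\mathrm{Y})_+$ satisfy $\|Tf_1+\cdots+Tf_n\|=\|f_1+\cdots+f_n\|$ for all $n\in\mathbb{N}$ and $f_1,\dots,f_n\in F(\mathrm{X})$. Then for every $x_0\in\mathrm{X}$, every $f\in F(\mathrm{X})$ and every $y\in\operatorname{psupp}_T(x_0)$ we have $(Tf)(y)\le f(x_0)$.
   Context: $C_0(\mathrm{X})_+$: nonnegative continuous functions vanishing at infinity, sup-norm. $\operatorname{pk}(f)=\{x: f(x)=\|f\|\}$. $F(\mathrm{X})$ "contains sufficiently many functions to peak on compact $G_\delta$ subsets" if every nonempty compact $G_\delta$ set $K\subset\mathrm{X}$ equals $\operatorname{pk}(f)$ for some $f\in F(\mathrm{X})$. For $x\in\mathrm{X}$: $\operatorname{PKat}(x)=\{g\in F(\mathrm{X}): g(x)=\|g\|\}$ and $\operatorname{psupp}_T(x)=\bigcap_{h\in\operatorname{PKat}(x)}\operatorname{pk}(Th)\subset\mathrm{Y}$. *)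

theory Defs
  imports "HOL-Analysis.Analysis"
begin

text \<open>Nonnegative continuous real functions on the topological space X vanishing
at infinity (only values on the carrier matter).\<close>
definition C0_plus :: "'a topology \<Rightarrow> ('a \<Rightarrow> real) set" where
  "C0_plus X = {f. continuous_map X euclideanreal f \<and> (\<forall>x\<in>topspace X. 0 \<le> f x) \<and>
      (\<forall>e>0. compactin X {x \<in> topspace X. e \<le> f x})}"

definition supnorm :: "'a topology \<Rightarrow> ('a \<Rightarrow> real) \<Rightarrow> real" where
  "supnorm X f = Sup (insert 0 ((\<lambda>x. \<bar>f x\<bar>) ` topspace X))"

definition pk :: "'a topology \<Rightarrow> ('a \<Rightarrow> real) \<Rightarrow> 'a set" where
  "pk X f = {x \<in> topspace X. f x = supnorm X f}"

definition gdelta_in :: "'a topology \<Rightarrow> 'a set \<Rightarrow> bool" where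
  "gdelta_in X K \<longleftrightarrow> (\<exists>U :: nat \<Rightarrow> 'a set. (\<forall>n. openin X (U n)) \<and> K = \<Inter> (range U))"

definition peaks_on_compact_gdelta :: "'a topology \<Rightarrow> ('a \<Rightarrow> real) set \<Rightarrow> bool" where
  "peaks_on_compact_gdelta X F \<longleftrightarrow>
     (\<forall>K. K \<noteq> {} \<and> compactin X K \<and> gdelta_in X K \<longrightarrow> (\<exists>f\<in>F. pk X f = K))"

definition PKat :: "'a topology \<Rightarrow> ('a \<Rightarrow> real) set \<Rightarrow> 'a \<Rightarrow> ('a \<Rightarrow> real) set" where
  "PKat X F x = {g \<in> F. g x = supnorm X g}"

definition psupp :: "'a topology \<Rightarrow> 'b topology \<Rightarrow> ('a \<Rightarrow> real) set
    \<Rightarrow> (('a \<Rightarrow> real) \<Rightarrow> ('b \<Rightarrow> real)) \<Rightarrow> 'a \<Rightarrow> 'b set" where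
  "psupp X Y F T x = {y \<in> topspace Y. \<forall>h \<in> PKat X F x. y \<in> pk Y (T h)}"

end

theory Submission
  imports Defs
begin

text \<open>Suppose \<open>f x\<^sub>0 < c < T f y\<close>. Around the compact \<open>G\<^sub>\<delta>\<close> set \<open>K\<close> with
  \<open>x\<^sub>0 \<in> K \<subseteq> {f < c}\<close> there is \<open>h \<in> F\<close> peaking exactly on \<open>K\<close>, so \<open>h\<close> stays
  a fixed \<open>\<delta>\<close> below its norm where \<open>f \<ge> c\<close>. For \<open>m\<close> large, \<open>\<parallel>f + m h\<parallel> \<le> m\<parallel>h\<parallel> + c\<close>,
  while \<open>y \<in> psupp\<^sub>T(x\<^sub>0)\<close> forces \<open>(Th)(y) = \<parallel>h\<parallel>\<close> and hence
  \<open>\<parallel>Tf + m Th\<parallel> \<ge> T f y + m\<parallel>h\<parallel>\<close>; the norm identity for \<open>f, h, \<dots>, h\<close> gives a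
  contradiction.\<close>

lemma C0_plus_bounded:
  assumes "f \<in> C0_plus X"
  shows "\<exists>B. \<forall>x\<in>topspace X. \<bar>f x\<bar> \<le> B"
proof -
  let ?S = "{x \<in> topspace X. 1 \<le> f x}"
  have cpt: "compactin X ?S" and cont: "continuous_map X euclideanreal f"
    and nonneg: "\<forall>x\<in>topspace X. 0 \<le> f x"
    using assms by (auto simp: C0_plus_def)
  have "compact (f ` ?S)"
    using image_compactin[OF cpt cont] by simp
  then obtain B where B: "\<forall>t\<in>f ` ?S. \<bar>t\<bar> \<le> B"
    using compact_imp_bounded bounded_real by metis
  have "\<bar>f x\<bar> \<le> max 1 B" if "x \<in> topspace X" for x
    using B nonneg that by (cases "1 \<le> f x") fastforce+
  then show ?thesis by blast
qed

lemma supnorm_upper: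
  assumes "\<forall>x\<in>topspace X. \<bar>f x\<bar> \<le> B" and "x \<in> topspace X"
  shows "\<bar>f x\<bar> \<le> supnorm X f"
  unfolding supnorm_def
  by (rule cSup_upper) (use assms in \<open>auto intro!: bdd_aboveI[of _ "max 0 B"]\<close>)

lemma supnorm_nonneg:
  assumes "\<forall>x\<in>topspace X. \<bar>f x\<bar> \<le> B"
  shows "0 \<le> supnorm X f"
  unfolding supnorm_def
  by (rule cSup_upper) (use assms in \<open>auto intro!: bdd_aboveI[of _ "max 0 B"]\<close>)

lemma supnorm_least:
  assumes "\<forall>x\<in>topspace X. \<bar>f x\<bar> \<le> B" and "0 \<le> B"
  shows "supnorm X f \<le> B"
  unfolding supnorm_def
  by (rule cSup_least) (use assms in auto)

lemma C0_plus_le_supnorm: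
  assumes "f \<in> C0_plus X" and "x \<in> topspace X"
  shows "0 \<le> f x" "f x \<le> supnorm X f"
proof -
  show "0 \<le> f x" using assms by (auto simp: C0_plus_def)
  obtain B where "\<forall>x\<in>topspace X. \<bar>f x\<bar> \<le> B"
    using C0_plus_bounded[OF assms(1)] by blast
  then show "f x \<le> supnorm X f"
    using supnorm_upper assms(2) by fastforce
qed

lemma supnorm_add_multiple_ge:
  assumes "f \<in> C0_plus X" and "h \<in> C0_plus X" and "x \<in> topspace X"
  shows "f x + real m * h x \<le> supnorm X (\<lambda>x. f x + real m * h x)"
proof -
  have "\<forall>z\<in>topspace X. \<bar>f z + real m * h z\<bar> \<le> supnorm X f + real m * supnorm X h"
    using C0_plus_le_supnorm[OF assms(1)] C0_plus_le_supnorm[OF assms(2)]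
    by (simp add: mult_left_mono add_mono)
  from supnorm_upper[OF this assms(3)] show ?thesis
    by simp
qed

text \<open>The multiple \<open>m\<close> must exceed \<open>\<parallel>f\<parallel> / \<delta>\<close>, so that \<open>m h\<close> loses more than
  \<open>f\<close> can gain where \<open>f \<ge> c\<close>.\<close>
lemma supnorm_add_multiple_le:
  assumes "f \<in> C0_plus X" and "h \<in> C0_plus X" and "\<delta> > 0" and "0 \<le> c"
    and gap: "\<forall>x\<in>topspace X. f x < c \<or> h x \<le> supnorm X h - \<delta>"
  shows "\<exists>m::nat. supnorm X (\<lambda>x. f x + real m * h x) \<le> real m * supnorm X h + c"
proof -
  obtain m :: nat where "supnorm X f / \<delta> \<le> real m"
    using real_arch_simple by blast
  then have m: "supnorm X f \<le> real m * \<delta>"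
    using \<open>\<delta> > 0\<close> by (simp add: field_simps)
  have "\<forall>x\<in>topspace X. \<bar>f x + real m * h x\<bar> \<le> real m * supnorm X h + c"
  proof
    fix x assume x: "x \<in> topspace X"
    note f = C0_plus_le_supnorm[OF assms(1) x] and h = C0_plus_le_supnorm[OF assms(2) x]
    consider "f x < c" | "h x \<le> supnorm X h - \<delta>"
      using gap x by blast
    then have "f x + real m * h x \<le> real m * supnorm X h + c"
    proof cases
      case 1
      moreover have "real m * h x \<le> real m * supnorm X h"
        using h by (simp add: mult_left_mono)
      ultimately show ?thesis by linarith
    next
      case 2
      then have "real m * h x \<le> real m * supnorm X h - real m * \<delta>"
        using mult_left_mono[OF 2, of "real m"] by (simp add: right_diff_distrib)
      then show ?thesis using f m \<open>0 \<le> c\<close> by linarith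
    qed
    then show "\<bar>f x + real m * h x\<bar> \<le> real m * supnorm X h + c" using f h by simp
  qed
  moreover obtain B where "\<forall>x\<in>topspace X. \<bar>h x\<bar> \<le> B"
    using C0_plus_bounded[OF assms(2)] by blast
  then have "0 \<le> real m * supnorm X h + c"
    using supnorm_nonneg \<open>0 \<le> c\<close> by (metis add_nonneg_nonneg of_nat_0_le_iff mult_nonneg_nonneg)
  ultimately have "supnorm X (\<lambda>x. f x + real m * h x) \<le> real m * supnorm X h + c"
    by (rule supnorm_least)
  then show ?thesis ..
qed

lemma gdelta_in_zero_set:
  assumes "continuous_map X euclideanreal g"
  shows "gdelta_in X {x \<in> topspace X. g x = 0}"
  unfolding gdelta_in_def
proof (intro exI conjI allI)
  let ?U = "\<lambda>n. {x \<in> topspace X. \<bar>g x\<bar> \<in> {..< 1 / real (Suc n)}}"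
  show "openin X (?U n)" for n
    by (rule openin_continuous_map_preimage[OF continuous_map_real_abs[OF assms]]) simp
  have zero: "g x = 0" if "\<forall>n. \<bar>g x\<bar> < 1 / real (Suc n)" for x
  proof (rule ccontr)
    assume "g x \<noteq> 0"
    then obtain n where "inverse (real (Suc n)) < \<bar>g x\<bar>"
      using reals_Archimedean[of "\<bar>g x\<bar>"] by auto
    moreover have "\<bar>g x\<bar> < 1 / real (Suc n)"
      using that by blast
    ultimately show False
      by (simp add: inverse_eq_divide)
  qed
  have "x \<in> \<Inter> (range ?U) \<longleftrightarrow> x \<in> topspace X \<and> (\<forall>n. \<bar>g x\<bar> < 1 / real (Suc n))" for x
    by auto
  then show "{x \<in> topspace X. g x = 0} = \<Inter> (range ?U)"
    using zero by auto
qed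

text \<open>The set \<open>K\<close> is the zero set of an Urysohn function vanishing at \<open>x\<close> and equal
  to \<open>1\<close> off a relatively compact neighbourhood of \<open>x\<close> inside \<open>U\<close>.\<close>
lemma compact_gdelta_in_open:
  assumes "locally_compact_space X" and "Hausdorff_space X"
    and "openin X U" and "x \<in> U"
  obtains K where "compactin X K" "gdelta_in X K" "x \<in> K" "K \<subseteq> U"
proof -
  have "regular_space X"
    using assms(1,2) locally_compact_Hausdorff_imp_regular_space by blast
  then have creg: "completely_regular_space X"
    using locally_compact_regular_imp_completely_regular_space assms(1) by blast
  obtain V N where V: "openin X V" "compactin X N" "x \<in> V" "V \<subseteq> N" "N \<subseteq> U"
    using locally_compact_imp_neighbourhood_base[OF assms(1) \<open>regular_space X\<close>] assms(3,4)
    unfolding neighbourhood_base_of by metis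
  have "closedin X (topspace X - V)" "x \<in> topspace X - (topspace X - V)"
    using V(1,3) openin_subset by auto
  then obtain g where g: "continuous_map X (top_of_set {0..1::real}) g" "g x = 0"
    "g ` (topspace X - V) \<subseteq> {1}"
    using creg unfolding completely_regular_space_def by metis
  have gcont: "continuous_map X euclideanreal g"
    using g(1) by (simp add: continuous_map_in_subtopology)
  define K where "K = {z \<in> topspace X. g z = 0}"
  have "K \<subseteq> V"
    using g(3) by (force simp: K_def)
  moreover have "closedin X K"
    unfolding K_def using closedin_continuous_map_preimage[OF gcont, of "{0}"] by simp
  ultimately have "compactin X K"
    using closed_compactin[OF V(2)] V(4) by blast
  moreover have "x \<in> K"
    using g(2) V(1,3) openin_subset by (fastforce simp: K_def)
  ultimately show ?thesis
    using that gdelta_in_zero_set[OF gcont] \<open>K \<subseteq> V\<close> V(4,5) unfolding K_def by blast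
qed

text \<open>Above half its norm \<open>h\<close> lives on a compact set, where it attains a maximum
  strictly below the norm.\<close>
lemma C0_plus_peak_gap:
  assumes "h \<in> C0_plus X" and "closedin X S" and "S \<inter> pk X h = {}"
  obtains \<delta> where "\<delta> > 0" "\<forall>x\<in>S. h x \<le> supnorm X h - \<delta>"
proof -
  let ?n = "supnorm X h"
  have S: "S \<subseteq> topspace X"
    using assms(2) closedin_subset by blast
  have below: "h x < ?n" if "x \<in> S" for x
    using assms(3) that S C0_plus_le_supnorm[OF assms(1)] by (force simp: pk_def)
  show ?thesis
  proof (cases "S = {}")
    case True
    then show ?thesis using that[of 1] by simp
  next
    case False
    then have n: "0 < ?n"
      using below C0_plus_le_supnorm(1)[OF assms(1)] S by fastforce
    let ?C = "{x \<in> topspace X. h x \<in> {?n/2..}} \<inter> S"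
    have hcont: "continuous_map X euclideanreal h"
      using assms(1) by (simp add: C0_plus_def)
    have upper_cpt: "compactin X {x \<in> topspace X. ?n/2 \<le> h x}"
      using assms(1) half_gt_zero[OF n] unfolding C0_plus_def by blast
    have "closedin X ?C"
      by (intro closedin_Int closedin_continuous_map_preimage[OF hcont] assms(2)) auto
    then have Ccpt: "compactin X ?C"
      by (rule closed_compactin[OF upper_cpt, rotated]) auto
    show ?thesis
    proof (cases "?C = {}")
      case True
      then show ?thesis
        using that[of "?n/2"] n S by fastforce
    next
      case False
      obtain s where s: "s \<in> ?C" "\<forall>t\<in>?C. h t \<le> h s"
        using compact_attains_sup[of "h ` ?C"] image_compactin[OF Ccpt hcont] False by auto
      have "\<forall>x\<in>S. h x \<le> ?n - min (?n/2) (?n - h s)"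
        using s S by fastforce
      moreover have "h s < ?n"
        using s(1) below by blast
      ultimately show ?thesis
        using that[of "min (?n/2) (?n - h s)"] n by simp
    qed
  qed
qed

lemma PKat_gap_outside_open:
  assumes "locally_compact_space X" and "Hausdorff_space X"
    and "F \<subseteq> C0_plus X" and "peaks_on_compact_gdelta X F"
    and "openin X U" and "x0 \<in> U"
  obtains h \<delta> where "h \<in> PKat X F x0" "\<delta> > 0"
    "\<forall>x\<in>topspace X - U. h x \<le> supnorm X h - \<delta>"
proof -
  obtain K where K: "compactin X K" "gdelta_in X K" "x0 \<in> K" "K \<subseteq> U"
    by (rule compact_gdelta_in_open[OF assms(1,2,5,6)])
  then have "K \<noteq> {}"
    by blast
  then obtain h where h: "h \<in> F" "pk X h = K"
    using assms(4) K(1,2) unfolding peaks_on_compact_gdelta_def by blast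
  have "h \<in> PKat X F x0"
    using h K(3) unfolding PKat_def pk_def by blast
  moreover have "closedin X (topspace X - U)"
    using assms(5) by blast
  moreover have "(topspace X - U) \<inter> pk X h = {}"
    using h(2) K(4) by blast
  moreover have "h \<in> C0_plus X"
    using h(1) assms(3) by blast
  ultimately show ?thesis
    using that C0_plus_peak_gap by metis
qed

lemma supnorm_add_multiple_eq:
  assumes norm: "\<forall>fs. set fs \<subseteq> F \<longrightarrow>
      supnorm Y (\<lambda>y. sum_list (map (\<lambda>f. T f y) fs)) = supnorm X (\<lambda>x. sum_list (map (\<lambda>f. f x) fs))"
    and "f \<in> F" and "h \<in> F"
  shows "supnorm Y (\<lambda>y. T f y + real m * T h y) = supnorm X (\<lambda>x. f x + real m * h x)"
  using norm[rule_format, of "f # replicate m h"] assms(2,3)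
  by (simp add: sum_list_replicate set_replicate_conv_if)

lemma psupp_peak_value:
  assumes norm: "\<forall>fs. set fs \<subseteq> F \<longrightarrow>
      supnorm Y (\<lambda>y. sum_list (map (\<lambda>f. T f y) fs)) = supnorm X (\<lambda>x. sum_list (map (\<lambda>f. f x) fs))"
    and "y \<in> psupp X Y F T x0" and "h \<in> PKat X F x0"
  shows "T h y = supnorm X h"
proof -
  have "T h y = supnorm Y (T h)"
    using assms(2,3) unfolding psupp_def pk_def by auto
  also have "\<dots> = supnorm X h"
    using norm[rule_format, of "[h]"] assms(3) by (simp add: PKat_def)
  finally show ?thesis .
qed

theorem mainTheorem17:
  fixes X :: "'a topology" and Y :: "'b topology"
    and F :: "('a \<Rightarrow> real) set" and T :: "('a \<Rightarrow> real) \<Rightarrow> ('b \<Rightarrow> real)"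
  assumes "locally_compact_space X" and "Hausdorff_space X"
    and "locally_compact_space Y" and "Hausdorff_space Y"
    and "F \<subseteq> C0_plus X"
    and "peaks_on_compact_gdelta X F"
    and "\<forall>f\<in>F. T f \<in> C0_plus Y"
    and "\<forall>fs. set fs \<subseteq> F \<longrightarrow>
           supnorm Y (\<lambda>y. sum_list (map (\<lambda>f. T f y) fs)) =
           supnorm X (\<lambda>x. sum_list (map (\<lambda>f. f x) fs))"
    and "x0 \<in> topspace X" and "f \<in> F" and "y \<in> psupp X Y F T x0"
  shows "T f y \<le> f x0"
proof (rule ccontr)
  assume "\<not> T f y \<le> f x0"
  then obtain c where c: "f x0 < c" "c < T f y"
    using dense not_le by blast
  have f: "f \<in> C0_plus X"
    using assms(5,10) by auto
  let ?U = "{x \<in> topspace X. f x \<in> {..<c}}"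
  have "openin X ?U"
    using f by (intro openin_continuous_map_preimage) (auto simp: C0_plus_def)
  moreover have "x0 \<in> ?U"
    using assms(9) c(1) by simp
  ultimately obtain h \<delta> where h: "h \<in> PKat X F x0" "\<delta> > 0"
    "\<forall>x\<in>topspace X - ?U. h x \<le> supnorm X h - \<delta>"
    by (rule PKat_gap_outside_open[OF assms(1,2,5,6)])
  have hF: "h \<in> F"
    using h(1) by (simp add: PKat_def)
  have "0 \<le> c"
    using C0_plus_le_supnorm(1)[OF f assms(9)] c(1) by linarith
  moreover have "\<forall>x\<in>topspace X. f x < c \<or> h x \<le> supnorm X h - \<delta>"
    using h(3) by auto
  moreover have "h \<in> C0_plus X"
    using hF assms(5) by blast
  ultimately obtain m :: nat where "supnorm X (\<lambda>x. f x + real m * h x) \<le> real m * supnorm X h + c"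
    using supnorm_add_multiple_le[OF f _ h(2)] by blast
  moreover have "y \<in> topspace Y"
    using assms(11) by (simp add: psupp_def)
  then have "T f y + real m * T h y \<le> supnorm Y (\<lambda>y. T f y + real m * T h y)"
    by (rule supnorm_add_multiple_ge[rotated 2]) (use assms(7,10) hF in blast)+
  then have "T f y + real m * supnorm X h \<le> supnorm X (\<lambda>x. f x + real m * h x)"
    using psupp_peak_value[OF assms(8,11) h(1)] supnorm_add_multiple_eq[OF assms(8,10) hF] by simp
  ultimately show False
    using c(2) by linarith
qed

end
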